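(* For every $1$-Sperner hypergraph ${\cal H}=(V,{\cal E})$ and every vector $\lambda\in\mathbb{R}^{\cal E}$, if $\lambda^\top A^{\cal H}=\mathbf{1}^\top$ then $\lambda^\top\mathbf{1}\ge1$.
   Context: A hypergraph ${\cal H}=(V,{\cal E})$ consists of a finite vertex set $V$ and a set ${\cal E}$ of subsets of $V$. It is $1$-Sperner if every two distinct hyperedges $e,f$ satisfy $\min\{|e\setminus f|,|f\setminus e|\}=1$. The incidence matrix $A^{\cal H}\in\{0,1\}^{{\cal E}\times V}$ has rows indexed by hyperedges and columns by vertices, with entry $1$ at $(e,v)$ iff $v\in e$. $\mathbf{1}$ denotes the all-ones vector of appropriate dimension. *)

theory Defs
  imports Complex_Main
begin

definition hypergraph :: "'a set \<Rightarrow> 'a set set \<Rightarrow> bool" where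
  "hypergraph V E \<longleftrightarrow> finite V \<and> (\<forall>e\<in>E. e \<subseteq> V)"

definition one_sperner :: "'a set set \<Rightarrow> bool" where
  "one_sperner E \<longleftrightarrow> (\<forall>e\<in>E. \<forall>f\<in>E. e \<noteq> f \<longrightarrow> min (card (e - f)) (card (f - e)) = 1)"

text \<open>Incidence matrix A^H, rows indexed by hyperedges, columns by vertices.\<close>
definition incidence :: "'a set \<Rightarrow> 'a \<Rightarrow> real" where
  "incidence e v = (if v \<in> e then 1 else 0)"

end

(*
  A 1-Sperner family with at least two edges has a vertex z such that e - h = {z} whenever
  z \<in> e and z \<notin> h (take e\<^sub>0 of minimum size, g of maximum size among the others, and
  e\<^sub>0 - g = {z}). Hence the other vertices split into the set W\<^sub>0 covered by edges through z
  and the rest W\<^sub>1: edges through z miss W\<^sub>1, edges avoiding z contain W\<^sub>0, and both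
  subfamilies are again 1-Sperner on their part.

  Induct on the number of vertices, with an arbitrary right-hand side t > 0. The row of z says
  that the edges through z carry weight t, so it suffices that the weight c of the edges
  avoiding z is nonnegative. If W\<^sub>1 \<noteq> {}, those edges solve the system on W\<^sub>1, so c \<ge> t.
  Otherwise, if c < t, the edges through z solve the system on W\<^sub>0 with right-hand side t - c,
  so t \<ge> t - c.
*)
theory Submission
  imports Defs
begin

lemma one_sperner_card_diff_eq_1:
  assumes "one_sperner E" "e \<in> E" "f \<in> E" "e \<noteq> f"
    and "finite e" "finite f" "card e \<le> card f"
  shows "card (e - f) = 1"
proof -
  have "min (card (e - f)) (card (f - e)) = 1"
    using assms(1-4) unfolding one_sperner_def by blast
  moreover have "card (e - f) \<le> card (f - e)"
    using assms(5-7) by (rule card_le_sym_Diff)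
  ultimately show ?thesis by simp
qed

lemma one_sperner_diff_nonempty:
  assumes "one_sperner E" "e \<in> E" "f \<in> E" "e \<noteq> f"
  shows "e - f \<noteq> {}"
proof -
  have "min (card (e - f)) (card (f - e)) = 1"
    using assms unfolding one_sperner_def by blast
  then have "card (e - f) \<noteq> 0" by (auto simp: min_def split: if_splits)
  then show ?thesis by (metis card.empty)
qed

lemma card_1_eq_singleton: "card A = 1 \<Longrightarrow> a \<in> A \<Longrightarrow> A = {a}"
  by (auto simp: card_1_singleton_iff)

lemma one_sperner_separating_vertex:
  assumes "one_sperner F" "finite F" "\<forall>e\<in>F. finite e"
    and "e1 \<in> F" "e2 \<in> F" "e1 \<noteq> e2"
  obtains z where "\<exists>e\<in>F. z \<in> e" "\<exists>h\<in>F. z \<notin> h"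
    and "\<And>e h. e \<in> F \<Longrightarrow> h \<in> F \<Longrightarrow> z \<in> e \<Longrightarrow> z \<notin> h \<Longrightarrow> e - h = {z}"
proof -
  have diff_card: "card (e - f) = 1" if "e \<in> F" "f \<in> F" "e \<noteq> f" "card e \<le> card f" for e f
    using that(4) assms(3) that(1,2) by (intro one_sperner_card_diff_eq_1[OF assms(1) that(1-3)]) auto
  note diff_nonempty = one_sperner_diff_nonempty[OF assms(1)]
  obtain e0 where e0: "e0 \<in> F" and e0_min: "\<And>f. f \<in> F \<Longrightarrow> card e0 \<le> card f"
    using ex_has_least_nat[of "\<lambda>e. e \<in> F" e1 card] assms(4) by blast
  have fin_rest: "finite (F - {e0})" and "F - {e0} \<noteq> {}"
    using assms(2,4-6) by auto
  then obtain g where g: "g \<in> F" "g \<noteq> e0" and g_Max: "Max (card ` (F - {e0})) = card g"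
    by (metis obtains_MAX DiffE singletonI)
  have g_max: "card f \<le> card g" if "f \<in> F" "f \<noteq> e0" for f
    unfolding g_Max[symmetric] using fin_rest that by (intro Max_ge) auto
  have e0_diff: "\<exists>a. e0 - f = {a}" if "f \<in> F" "f \<noteq> e0" for f
    using diff_card[OF e0 that(1)] that e0_min by (simp add: card_1_singleton_iff)
  then obtain z where z: "e0 - g = {z}" using g by blast
  have e0_diff_z: "e0 - h = {z}" if h: "h \<in> F" "z \<notin> h" for h
  proof -
    have "h \<noteq> e0" using z h by auto
    then obtain a where "e0 - h = {a}" using e0_diff h by blast
    then show ?thesis using z h by auto
  qed
  have diff_g: "e - g = {z}" if "e \<in> F" "z \<in> e" for e
  proof -
    have "e \<noteq> g" using that z by auto
    moreover have "card e \<le> card g" using g_max e0_min g that by (cases "e = e0") auto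
    ultimately have "card (e - g) = 1" by (rule diff_card[OF that(1) g(1)])
    then show ?thesis using that z by (intro card_1_eq_singleton) auto
  qed
  have sep: "e - h = {z}" if e: "e \<in> F" "z \<in> e" and h: "h \<in> F" "z \<notin> h" for e h
  proof (cases "card e \<le> card h")
    case True
    have "e \<noteq> h" using e h by auto
    then have "card (e - h) = 1" using True by (rule diff_card[OF e(1) h(1)])
    then show ?thesis using e h by (intro card_1_eq_singleton) auto
  next
    case False
    then have "e \<noteq> e0" using e0_min[OF h(1)] by auto
    then obtain b where b: "e0 - e = {b}" using e0_diff e by blast
    then have b_e0: "b \<in> e0" "b \<notin> e" and "b \<noteq> z" using e by auto
    have "e0 \<subseteq> insert z h" using e0_diff_z[OF h] by auto
    then have "b \<in> h" using b_e0 \<open>b \<noteq> z\<close> by auto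
    have "h \<noteq> e" using e h by auto
    then have "card (h - e) = 1" using diff_card[OF h(1) e(1)] False by simp
    then have "h - e = {b}" using \<open>b \<in> h\<close> b_e0 by (intro card_1_eq_singleton) auto
    then have "h \<subseteq> insert b (e - {z})" using h(2) by auto
    moreover have "e0 \<subseteq> insert z g" using e0_diff_z[OF g(1)] z by auto
    moreover have "e \<subseteq> insert z g" using diff_g[OF e] by auto
    ultimately have "h \<subseteq> g" using b_e0 \<open>b \<noteq> z\<close> by auto
    then have "h = g" using diff_nonempty[OF h(1) g(1)] by auto
    then show ?thesis using False g_max[OF e(1) \<open>e \<noteq> e0\<close>] by simp
  qed
  have "z \<in> e0" "z \<notin> g" using z by auto
  with e0 g(1) show ?thesis by (intro that[OF _ _ sep]) auto
qed

text \<open>The 1-Sperner property of the traces \<open>e \<inter> W\<close>, indexed by the edges themselves so that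
  the weights need no re-indexing when vertices are discarded.\<close>
definition one_sperner_on :: "'a set \<Rightarrow> 'a set set \<Rightarrow> bool" where
  "one_sperner_on W E \<longleftrightarrow>
     (\<forall>e\<in>E. \<forall>f\<in>E. e \<noteq> f \<longrightarrow> min (card ((e - f) \<inter> W)) (card ((f - e) \<inter> W)) = 1)"

lemma one_sperner_on_if_one_sperner:
  assumes "one_sperner E" "\<forall>e\<in>E. e \<subseteq> W"
  shows "one_sperner_on W E"
proof -
  have "(e - f) \<inter> W = e - f" if "e \<in> E" for e f using that assms(2) by blast
  then show ?thesis using assms(1) unfolding one_sperner_def one_sperner_on_def by simp
qed

lemma one_sperner_traces:
  assumes "one_sperner_on W E"
  shows "one_sperner ((\<lambda>e. e \<inter> W) ` E)"
  unfolding one_sperner_def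
proof (intro ballI impI)
  fix a b assume "a \<in> (\<lambda>e. e \<inter> W) ` E" "b \<in> (\<lambda>e. e \<inter> W) ` E" "a \<noteq> b"
  then obtain e f where "e \<in> E" "f \<in> E" "e \<noteq> f" "a = e \<inter> W" "b = f \<inter> W" by auto
  moreover from this have "(e - f) \<inter> W = a - b" "(f - e) \<inter> W = b - a" by auto
  ultimately show "min (card (a - b)) (card (b - a)) = 1"
    using assms unfolding one_sperner_on_def by metis
qed

lemma one_sperner_on_diff_nonempty:
  assumes "one_sperner_on W E" "e \<in> E" "f \<in> E" "e \<noteq> f"
  shows "(e - f) \<inter> W \<noteq> {}"
proof -
  have "min (card ((e - f) \<inter> W)) (card ((f - e) \<inter> W)) = 1"
    using assms unfolding one_sperner_on_def by blast
  then have "card ((e - f) \<inter> W) \<noteq> 0" by (auto simp: min_def split: if_splits)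
  then show ?thesis by (metis card.empty)
qed

lemma one_sperner_on_restrict:
  assumes "one_sperner_on W E" "E' \<subseteq> E" "W' \<subseteq> W"
    and "\<And>e f. e \<in> E' \<Longrightarrow> f \<in> E' \<Longrightarrow> (e - f) \<inter> W \<subseteq> W'"
  shows "one_sperner_on W' E'"
  unfolding one_sperner_on_def
proof (intro ballI impI)
  fix e f assume ef: "e \<in> E'" "f \<in> E'" "e \<noteq> f"
  have "(e - f) \<inter> W' = (e - f) \<inter> W" "(f - e) \<inter> W' = (f - e) \<inter> W"
    using assms(3) assms(4)[OF ef(1,2)] assms(4)[OF ef(2,1)] by blast+
  moreover have "min (card ((e - f) \<inter> W)) (card ((f - e) \<inter> W)) = 1"
    using assms(1,2) ef unfolding one_sperner_on_def by blast
  ultimately show "min (card ((e - f) \<inter> W')) (card ((f - e) \<inter> W')) = 1" by simp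
qed

lemma one_sperner_on_separating_vertex:
  assumes "one_sperner_on W E" "finite W" "finite E"
    and "e1 \<in> E" "e2 \<in> E" "e1 \<noteq> e2"
  obtains z where "z \<in> W" "\<exists>e\<in>E. z \<in> e" "\<exists>h\<in>E. z \<notin> h"
    and "\<And>e h. e \<in> E \<Longrightarrow> h \<in> E \<Longrightarrow> z \<in> e \<Longrightarrow> z \<notin> h \<Longrightarrow> (e - h) \<inter> W = {z}"
proof -
  let ?F = "(\<lambda>e. e \<inter> W) ` E"
  have "finite ?F" "\<forall>e\<in>?F. finite e" using assms(2,3) by auto
  moreover have "e1 \<inter> W \<in> ?F" "e2 \<inter> W \<in> ?F" using assms(4,5) by auto
  moreover have "e1 \<inter> W \<noteq> e2 \<inter> W"
    using one_sperner_on_diff_nonempty[OF assms(1,4-6)] by blast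
  ultimately obtain z where z_in: "\<exists>e\<in>?F. z \<in> e" and z_out: "\<exists>h\<in>?F. z \<notin> h"
    and sep: "\<And>e h. e \<in> ?F \<Longrightarrow> h \<in> ?F \<Longrightarrow> z \<in> e \<Longrightarrow> z \<notin> h \<Longrightarrow> e - h = {z}"
    by (rule one_sperner_separating_vertex[OF one_sperner_traces[OF assms(1)]]) (rule that)
  have "z \<in> W" using z_in by auto
  moreover have "(e - h) \<inter> W = {z}" if "e \<in> E" "h \<in> E" "z \<in> e" "z \<notin> h" for e h
    using sep[of "e \<inter> W" "h \<inter> W"] that \<open>z \<in> W\<close> by (simp add: Diff_Int_distrib2)
  ultimately show ?thesis using that z_in z_out by blast
qed

lemma one_sperner_on_decomposition:
  assumes "one_sperner_on W E" "finite W" "finite E"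
    and "e1 \<in> E" "e2 \<in> E" "e1 \<noteq> e2"
  obtains z W\<^sub>0 W\<^sub>1 where "z \<in> W" "W\<^sub>0 \<subseteq> W - {z}" "W\<^sub>1 = W - {z} - W\<^sub>0"
    and "\<exists>e\<in>E. z \<in> e" "\<exists>e\<in>E. z \<notin> e"
    and "\<And>e. e \<in> E \<Longrightarrow> z \<in> e \<Longrightarrow> e \<inter> W \<subseteq> insert z W\<^sub>0"
    and "\<And>e. e \<in> E \<Longrightarrow> z \<notin> e \<Longrightarrow> W\<^sub>0 \<subseteq> e"
    and "one_sperner_on W\<^sub>0 {e\<in>E. z \<in> e}"
    and "one_sperner_on W\<^sub>1 {e\<in>E. z \<notin> e}"
proof -
  obtain z where z: "z \<in> W" "\<exists>e\<in>E. z \<in> e" "\<exists>e\<in>E. z \<notin> e"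
    and sep: "\<And>e h. e \<in> E \<Longrightarrow> h \<in> E \<Longrightarrow> z \<in> e \<Longrightarrow> z \<notin> h \<Longrightarrow> (e - h) \<inter> W = {z}"
    by (rule one_sperner_on_separating_vertex[OF assms]) (rule that)
  define W\<^sub>0 where "W\<^sub>0 = {v \<in> W - {z}. \<exists>e\<in>E. z \<in> e \<and> v \<in> e}"
  define W\<^sub>1 where "W\<^sub>1 = W - {z} - W\<^sub>0"
  have through_z: "e \<inter> W \<subseteq> insert z W\<^sub>0" if "e \<in> E" "z \<in> e" for e
    using that unfolding W\<^sub>0_def by blast
  have avoiding_z: "W\<^sub>0 \<subseteq> e" if "e \<in> E" "z \<notin> e" for e
  proof
    fix v assume "v \<in> W\<^sub>0"
    then obtain f where "f \<in> E" "z \<in> f" "v \<in> f" "v \<in> W" "v \<noteq> z" unfolding W\<^sub>0_def by blast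
    with sep[of f e] that show "v \<in> e" by blast
  qed
  have "one_sperner_on W\<^sub>0 {e\<in>E. z \<in> e}"
    using assms(1) by (rule one_sperner_on_restrict) (auto simp: W\<^sub>0_def)
  moreover have "one_sperner_on W\<^sub>1 {e\<in>E. z \<notin> e}"
    using assms(1) by (rule one_sperner_on_restrict) (use avoiding_z in \<open>auto simp: W\<^sub>1_def\<close>)
  ultimately show ?thesis
    using that[OF z(1) _ W\<^sub>1_def z(2,3) through_z avoiding_z] unfolding W\<^sub>0_def by blast
qed

lemma sum_incidence_eq:
  "finite E \<Longrightarrow> (\<Sum>e\<in>E. lam e * incidence e v) = (\<Sum>e\<in>{e\<in>E. v \<in> e}. lam e)"
  by (auto simp: sum.inter_filter incidence_def intro!: sum.cong)

lemma sum_split_by_vertex: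
  assumes "finite E"
  shows "(\<Sum>e\<in>E. lam e) = (\<Sum>e\<in>{e\<in>E. z \<in> e}. lam e) + (\<Sum>e\<in>{e\<in>E. z \<notin> e}. lam e)"
proof -
  have "(\<Sum>e\<in>E. lam e) = (\<Sum>e\<in>{e\<in>E. z \<in> e} \<union> {e\<in>E. z \<notin> e}. lam e)"
    by (rule sum.cong) auto
  also have "\<dots> = (\<Sum>e\<in>{e\<in>E. z \<in> e}. lam e) + (\<Sum>e\<in>{e\<in>E. z \<notin> e}. lam e)"
    using assms by (intro sum.union_disjoint) auto
  finally show ?thesis .
qed

lemma sum_row_split_by_vertex:
  assumes "finite E" "\<And>e. e \<in> E \<Longrightarrow> z \<notin> e \<Longrightarrow> v \<in> e"
  shows "(\<Sum>e\<in>{e\<in>E. v \<in> e}. lam e)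
    = (\<Sum>e\<in>{e\<in>{e\<in>E. z \<in> e}. v \<in> e}. lam e) + (\<Sum>e\<in>{e\<in>E. z \<notin> e}. lam e)"
proof -
  have "{e\<in>E. v \<in> e} = {e\<in>{e\<in>E. z \<in> e}. v \<in> e} \<union> {e\<in>E. z \<notin> e}"
    using assms(2) by blast
  then show ?thesis using assms(1) by (simp only:) (intro sum.union_disjoint; auto)
qed

lemma sum_eq_row_if_subsingleton:
  assumes "finite E" "\<And>e f. e \<in> E \<Longrightarrow> f \<in> E \<Longrightarrow> e = f"
    and "(\<Sum>e\<in>{e\<in>E. w \<in> e}. lam e) = t" "t \<noteq> 0"
  shows "(\<Sum>e\<in>E. lam e) = t"
proof -
  have "{e\<in>E. w \<in> e} \<noteq> {}"
  proof
    assume "{e\<in>E. w \<in> e} = {}"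
    then show False using assms(3,4) by (metis sum.empty)
  qed
  then have "{e\<in>E. w \<in> e} = E" using assms(2) by blast
  then show ?thesis using assms(3) by simp
qed

lemma one_sperner_on_sum_ge:
  fixes lam :: "'a set \<Rightarrow> real"
  assumes "one_sperner_on W E" "finite W" "W \<noteq> {}" "finite E" "t > 0"
    and "\<And>v. v \<in> W \<Longrightarrow> (\<Sum>e\<in>{e\<in>E. v \<in> e}. lam e) = t"
  shows "(\<Sum>e\<in>E. lam e) \<ge> t"
  using assms
proof (induction "card W" arbitrary: W E t rule: less_induct)
  case less
  note row = less.prems(6)
  show ?case
  proof (cases "\<exists>e1\<in>E. \<exists>e2\<in>E. e1 \<noteq> e2")
    case False
    obtain w where "w \<in> W" using less.prems(3) by blast
    then have "(\<Sum>e\<in>E. lam e) = t"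
      using False less.prems(4,5) by (intro sum_eq_row_if_subsingleton[OF _ _ row]) auto
    then show ?thesis by simp
  next
    case True
    then obtain e1 e2 where "e1 \<in> E" "e2 \<in> E" "e1 \<noteq> e2" by blast
    with less.prems(1,2,4) obtain z W\<^sub>0 W\<^sub>1
      where z: "z \<in> W" "W\<^sub>0 \<subseteq> W - {z}" "W\<^sub>1 = W - {z} - W\<^sub>0"
        and z_in: "\<exists>e\<in>E. z \<in> e" and z_out: "\<exists>e\<in>E. z \<notin> e"
        and through_z: "\<And>e. e \<in> E \<Longrightarrow> z \<in> e \<Longrightarrow> e \<inter> W \<subseteq> insert z W\<^sub>0"
        and avoiding_z: "\<And>e. e \<in> E \<Longrightarrow> z \<notin> e \<Longrightarrow> W\<^sub>0 \<subseteq> e"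
        and sp0: "one_sperner_on W\<^sub>0 {e\<in>E. z \<in> e}"
        and sp1: "one_sperner_on W\<^sub>1 {e\<in>E. z \<notin> e}"
      by (rule one_sperner_on_decomposition) (rule that)
    have fin: "finite {e\<in>E. z \<in> e}" "finite {e\<in>E. z \<notin> e}" using less.prems(4) by auto
    define c where "c = (\<Sum>e\<in>{e\<in>E. z \<notin> e}. lam e)"
    have "(\<Sum>e\<in>E. lam e) = t + c"
      using sum_split_by_vertex[OF less.prems(4), of lam z] row[OF z(1)] unfolding c_def by simp
    moreover have "c \<ge> 0"
    proof (cases "W\<^sub>1 = {}")
      case False
      have "{e\<in>{e\<in>E. z \<notin> e}. v \<in> e} = {e\<in>E. v \<in> e}" if "v \<in> W\<^sub>1" for v
        using that z through_z by blast
      moreover have "card W\<^sub>1 < card W" using z less.prems(2) by (intro psubset_card_mono) auto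
      ultimately have "c \<ge> t"
        unfolding c_def using less.hyps[OF _ sp1 _ False fin(2) less.prems(5)] z less.prems(2) row
        by auto
      then show ?thesis using less.prems(5) by simp
    next
      case True
      then have W_eq: "W = insert z W\<^sub>0" using z by auto
      obtain e h where e: "e \<in> E" "z \<in> e" and h: "h \<in> E" "z \<notin> h" using z_in z_out by blast
      then have "(h - e) \<inter> W \<noteq> {}" using one_sperner_on_diff_nonempty[OF less.prems(1) h(1) e(1)] by auto
      then have "W\<^sub>0 \<noteq> {}" using W_eq e(2) by auto
      have row0: "(\<Sum>e\<in>{e\<in>{e\<in>E. z \<in> e}. v \<in> e}. lam e) = t - c" if "v \<in> W\<^sub>0" for v
      proof -
        have "\<And>e. e \<in> E \<Longrightarrow> z \<notin> e \<Longrightarrow> v \<in> e" using avoiding_z that by blast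
        then have "(\<Sum>e\<in>{e\<in>E. v \<in> e}. lam e) = (\<Sum>e\<in>{e\<in>{e\<in>E. z \<in> e}. v \<in> e}. lam e) + c"
          unfolding c_def by (rule sum_row_split_by_vertex[OF less.prems(4)])
        moreover have "v \<in> W" using that z by auto
        ultimately show ?thesis using row[of v] by simp
      qed
      show ?thesis
      proof (cases "c < t")
        case True
        have "card W\<^sub>0 < card W" using W_eq z less.prems(2) by (intro psubset_card_mono) auto
        then have "(\<Sum>e\<in>{e\<in>E. z \<in> e}. lam e) \<ge> t - c"
          using less.hyps[OF _ sp0 _ \<open>W\<^sub>0 \<noteq> {}\<close> fin(1)] True row0 less.prems(2) W_eq by auto
        then show ?thesis using row[OF z(1)] by simp
      next
        case False
        then show ?thesis using less.prems(5) by simp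
      qed
    qed
    ultimately show ?thesis by simp
  qed
qed

theorem corollary14:
  fixes V :: "'a set" and E :: "'a set set" and lam :: "'a set \<Rightarrow> real"
  assumes "hypergraph V E" and "V \<noteq> {}" and "one_sperner E"
    and "\<forall>v\<in>V. (\<Sum>e\<in>E. lam e * incidence e v) = 1"
  shows "(\<Sum>e\<in>E. lam e) \<ge> 1"
proof -
  have "finite V" and edges: "\<forall>e\<in>E. e \<subseteq> V"
    using assms(1) unfolding hypergraph_def by auto
  then have "finite E" by (meson Pow_iff finite_Pow_iff finite_subset subsetI)
  have "one_sperner_on V E" using assms(3) edges by (rule one_sperner_on_if_one_sperner)
  moreover have "(\<Sum>e\<in>{e\<in>E. v \<in> e}. lam e) = 1" if "v \<in> V" for v
    using assms(4) that sum_incidence_eq[OF \<open>finite E\<close>] by simp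
  ultimately show ?thesis
    using \<open>finite V\<close> assms(2) \<open>finite E\<close> by (intro one_sperner_on_sum_ge) auto
qed

end
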